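(* Let $m,n\ge 2$ and $L\ge 2$ be integers, and let $p_1,\dots,p_L$ and $q_1,\dots,q_L$ be positive integers with $n=\prod_{\ell=1}^Lp_\ell$ and $m=\prod_{\ell=1}^Lq_\ell$. For positive integers $r_1,\dots,r_{L-1}$ (with $r_0=r_L:=1$) consider the architecture $\beta=(\pi_\ell)_{\ell=1}^L$ with $\pi_\ell=(a_\ell,b_\ell,c_\ell,d_\ell)$, $a_\ell=\prod_{j=1}^{\ell-1}p_j$, $d_\ell=\prod_{j=\ell+1}^Lq_j$, $b_\ell=q_\ell r_{\ell-1}$, $c_\ell=p_\ell r_\ell$. (1) If $p_\ell\ge 2$ and $q_\ell\ge 2$ for every $1\le\ell\le L$, then there exists a choice of integers $r_1,\dots,r_{L-1}$ for which $\beta$ is non-redundant. (2) If $q_1=1$, or $p_L=1$, or $p_\ell q_\ell=1$ for some $2\le\ell\le L-1$, then no choice of $r_1,\dots,r_{L-1}$ makes $\beta$ non-redundant.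
   Context: Patterns are tuples $(a,b,c,d)$ of positive integers. Patterns $\pi=(a,b,c,d),\pi'=(a',b',c',d')$ are chainable if $ac/a'=b'd'/d=:r(\pi,\pi')$ is an integer, $a\mid a'$, $d'\mid d$; a chainable pair is redundant if $r(\pi,\pi')\ge\min(b,c')$. A chainable architecture (sequence of patterns whose consecutive pairs are chainable) is redundant if some consecutive pair is redundant, and non-redundant otherwise. (The architectures defined in the claim are always chainable.) *)

theory Defs
  imports Main "HOL.Rat"
begin

type_synonym pattern = "nat \<times> nat \<times> nat \<times> nat"

definition pr :: "pattern \<Rightarrow> pattern \<Rightarrow> rat" where
  "pr \<pi> \<pi>' = (case \<pi> of (a,b,c,d) \<Rightarrow> case \<pi>' of (a',b',c',d') \<Rightarrow>
      of_nat (a*c) / of_nat a')"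

definition chainable :: "pattern \<Rightarrow> pattern \<Rightarrow> bool" where
  "chainable \<pi> \<pi>' = (case \<pi> of (a,b,c,d) \<Rightarrow> case \<pi>' of (a',b',c',d') \<Rightarrow>
      of_nat (a*c) / of_nat a' = (of_nat (b'*d') / of_nat d :: rat)
      \<and> (of_nat (a*c) / of_nat a' :: rat) \<in> \<int>
      \<and> a dvd a' \<and> d' dvd d)"

definition redundant_pair :: "pattern \<Rightarrow> pattern \<Rightarrow> bool" where
  "redundant_pair \<pi> \<pi>' = (chainable \<pi> \<pi>' \<and>
      (case \<pi> of (a,b,c,d) \<Rightarrow> case \<pi>' of (a',b',c',d') \<Rightarrow>
        pr \<pi> \<pi>' \<ge> of_nat (min b c')))"

definition chainable_arch :: "pattern list \<Rightarrow> bool" where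
  "chainable_arch xs = (\<forall>i. i + 1 < length xs \<longrightarrow> chainable (xs!i) (xs!(i+1)))"

definition non_redundant :: "pattern list \<Rightarrow> bool" where
  "non_redundant xs = (chainable_arch xs \<and>
     (\<forall>i. i + 1 < length xs \<longrightarrow> \<not> redundant_pair (xs!i) (xs!(i+1))))"

definition rr :: "nat \<Rightarrow> (nat \<Rightarrow> nat) \<Rightarrow> nat \<Rightarrow> nat" where
  "rr L r l = (if l = 0 \<or> l = L then 1 else r l)"

definition pat :: "(nat \<Rightarrow> nat) \<Rightarrow> (nat \<Rightarrow> nat) \<Rightarrow> (nat \<Rightarrow> nat) \<Rightarrow> nat \<Rightarrow> nat \<Rightarrow> pattern" where
  "pat p q r L l = ((\<Prod>j\<in>{1..<l}. p j), q l * rr L r (l - 1), p l * rr L r l,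
                    (\<Prod>j\<in>{l+1..L}. q j))"

definition arch :: "(nat \<Rightarrow> nat) \<Rightarrow> (nat \<Rightarrow> nat) \<Rightarrow> (nat \<Rightarrow> nat) \<Rightarrow> nat \<Rightarrow> pattern list" where
  "arch p q r L = map (pat p q r L) [1..<L+1]"

end

theory Submission
  imports Defs
begin

text \<open>Consecutive patterns of the architecture always chain with \<open>r(\<pi>\<^sub>l, \<pi>\<^sub>l\<^sub>+\<^sub>1) = r\<^sub>l\<close>:
  the outer factors \<open>a\<close> and \<open>d\<close> telescope. So non-redundancy says exactly
  \<open>r\<^sub>l < q\<^sub>l r\<^sub>l\<^sub>-\<^sub>1\<close> and \<open>r\<^sub>l < p\<^sub>l\<^sub>+\<^sub>1 r\<^sub>l\<^sub>+\<^sub>1\<close> for \<open>1 \<le> l < L\<close>.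
  If all \<open>p\<^sub>l, q\<^sub>l \<ge> 2\<close>, then \<open>r\<^sub>l = 1\<close> satisfies these inequalities. Conversely, \<open>q\<^sub>1 = 1\<close>
  would force \<open>r\<^sub>1 < r\<^sub>0 = 1\<close>, \<open>p\<^sub>L = 1\<close> would force \<open>r\<^sub>L\<^sub>-\<^sub>1 < r\<^sub>L = 1\<close>, and
  \<open>p\<^sub>l q\<^sub>l = 1\<close> would give \<open>r\<^sub>l < r\<^sub>l\<^sub>-\<^sub>1 < r\<^sub>l\<close>.\<close>

lemma chainable_telescoping:
  assumes "a > 0" "p > 0" "q > 0" "d > 0"
  shows "chainable (a, b, p * s, q * d) (a * p, q * s, c, d)"
    and "pr (a, b, p * s, q * d) (a * p, q * s, c, d) = of_nat s"
proof -
  have ratio_left: "(of_nat (a * (p * s)) / of_nat (a * p) :: rat) = of_nat s"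
    using assms by (simp add: field_simps)
  moreover have "(of_nat (q * s * d) / of_nat (q * d) :: rat) = of_nat s"
    using assms by (simp add: field_simps)
  ultimately show "chainable (a, b, p * s, q * d) (a * p, q * s, c, d)"
    unfolding chainable_def prod.case by simp
  show "pr (a, b, p * s, q * d) (a * p, q * s, c, d) = of_nat s"
    unfolding pr_def prod.case ratio_left ..
qed

lemma redundant_pair_telescoping_iff:
  assumes "a > 0" "p > 0" "q > 0" "d > 0"
  shows "redundant_pair (a, b, p * s, q * d) (a * p, q * s, c, d) \<longleftrightarrow> min b c \<le> s"
  using chainable_telescoping[OF assms]
  by (simp add: redundant_pair_def del: of_nat_min)

context
  fixes p q :: "nat \<Rightarrow> nat" and L :: nat
  assumes pos: "\<forall>l\<in>{1..L}. p l > 0 \<and> q l > 0"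
begin

lemma pat_consecutive_telescoping:
  assumes "1 \<le> l" "l < L"
  obtains a d where "a > 0" "d > 0"
    and "pat p q r L l = (a, q l * rr L r (l - 1), p l * rr L r l, q (l + 1) * d)"
    and "pat p q r L (l + 1) = (a * p l, q (l + 1) * rr L r l, p (l + 1) * rr L r (l + 1), d)"
proof (rule that)
  show "(\<Prod>j\<in>{1..<l}. p j) > 0" "(\<Prod>j\<in>{l+2..L}. q j) > 0"
    using pos assms by (auto intro!: prod_pos)
  have "(\<Prod>j\<in>{l+1..L}. q j) = q (l + 1) * (\<Prod>j\<in>{l+2..L}. q j)"
    using assms by (simp add: prod.atLeast_Suc_atMost)
  then show "pat p q r L l =
      (\<Prod>j\<in>{1..<l}. p j, q l * rr L r (l - 1), p l * rr L r l, q (l + 1) * (\<Prod>j\<in>{l+2..L}. q j))"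
    by (simp add: pat_def)
  have "(\<Prod>j\<in>{1..<l+1}. p j) = (\<Prod>j\<in>{1..<l}. p j) * p l"
    using assms by (simp add: prod.op_ivl_Suc)
  then show "pat p q r L (l + 1) =
      ((\<Prod>j\<in>{1..<l}. p j) * p l, q (l + 1) * rr L r l, p (l + 1) * rr L r (l + 1), \<Prod>j\<in>{l+2..L}. q j)"
    by (simp add: pat_def)
qed

lemma chainable_pat_consecutive:
  assumes "1 \<le> l" "l < L"
  shows "chainable (pat p q r L l) (pat p q r L (l + 1))"
proof -
  have "p l > 0" "q (l + 1) > 0"
    using pos assms by auto
  with pat_consecutive_telescoping[OF assms] show ?thesis
    by (metis chainable_telescoping(1))
qed

lemma redundant_pair_pat_consecutive_iff:
  assumes "1 \<le> l" "l < L"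
  shows "redundant_pair (pat p q r L l) (pat p q r L (l + 1)) \<longleftrightarrow>
           min (q l * rr L r (l - 1)) (p (l + 1) * rr L r (l + 1)) \<le> rr L r l"
proof -
  have "p l > 0" "q (l + 1) > 0"
    using pos assms by auto
  with pat_consecutive_telescoping[OF assms] show ?thesis
    by (metis redundant_pair_telescoping_iff)
qed

lemma non_redundant_arch_iff:
  "non_redundant (arch p q r L) \<longleftrightarrow>
     (\<forall>l\<in>{1..<L}. rr L r l < q l * rr L r (l - 1) \<and> rr L r l < p (l + 1) * rr L r (l + 1))"
proof -
  have index_shift: "(\<forall>i. i + 1 < k \<longrightarrow> P (i + 1)) \<longleftrightarrow> (\<forall>l\<in>{1..<k}. P l)" for k and P :: "nat \<Rightarrow> bool"
    by (auto simp: Ball_def) (metis Suc_le_D)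
  have nth_arch: "arch p q r L ! i = pat p q r L (i + 1)" if "i < L" for i
    using that by (simp add: arch_def nth_map nth_upt del: upt_Suc)
  have length_arch: "length (arch p q r L) = L"
    by (simp add: arch_def)
  have "non_redundant (arch p q r L) \<longleftrightarrow>
     (\<forall>i. i + 1 < L \<longrightarrow> \<not> redundant_pair (pat p q r L (i + 1)) (pat p q r L (i + 1 + 1)))"
    using chainable_pat_consecutive[of "Suc _"] nth_arch
    unfolding non_redundant_def chainable_arch_def length_arch by auto
  also have "\<dots> \<longleftrightarrow> (\<forall>l\<in>{1..<L}. \<not> redundant_pair (pat p q r L l) (pat p q r L (l + 1)))"
    using index_shift[of _ "\<lambda>l. \<not> redundant_pair (pat p q r L l) (pat p q r L (l + 1))"] by simp
  finally show ?thesis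
    using redundant_pair_pat_consecutive_iff by (auto simp: not_le)
qed

lemma non_redundant_arch_one:
  assumes "\<forall>l\<in>{1..L}. p l \<ge> 2 \<and> q l \<ge> 2"
  shows "non_redundant (arch p q (\<lambda>_. 1) L)"
proof -
  have "\<forall>l\<in>{1..<L}. 1 < q l \<and> 1 < p (l + 1)"
  proof
    fix l assume "l \<in> {1..<L}"
    then have "q l \<ge> 2" "p (l + 1) \<ge> 2"
      using assms by auto
    then show "1 < q l \<and> 1 < p (l + 1)" by simp
  qed
  moreover have "rr L (\<lambda>_. 1) l = 1" for l
    by (simp add: rr_def)
  ultimately show ?thesis
    by (simp add: non_redundant_arch_iff)
qed

lemma non_redundant_arch_ineqs:
  assumes "non_redundant (arch p q r L)" "1 \<le> l" "l < L"
  shows "rr L r l < q l * rr L r (l - 1)" and "rr L r l < p (l + 1) * rr L r (l + 1)"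
  using assms by (simp_all add: non_redundant_arch_iff)

lemma non_redundant_arch_first_q:
  assumes "non_redundant (arch p q r L)" "1 < L" "r 1 > 0"
  shows "q 1 \<noteq> 1"
  using non_redundant_arch_ineqs(1)[OF assms(1), of 1] assms(2,3) by (simp add: rr_def)

lemma non_redundant_arch_last_p:
  assumes "non_redundant (arch p q r L)" "1 < L" "r (L - 1) > 0"
  shows "p L \<noteq> 1"
proof -
  have "rr L r (L - 1) < p L * rr L r L"
    using non_redundant_arch_ineqs(2)[OF assms(1), of "L - 1"] assms(2) by simp
  then show ?thesis
    using assms(2,3) by (auto simp: rr_def split: if_splits)
qed

lemma non_redundant_arch_inner:
  assumes "non_redundant (arch p q r L)" "2 \<le> l" "l < L"
  shows "p l * q l \<noteq> 1"
proof
  assume "p l * q l = 1"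
  then have "p l = 1" "q l = 1" by simp_all
  moreover have "rr L r (l - 1) < p l * rr L r l"
    using non_redundant_arch_ineqs(2)[OF assms(1), of "l - 1"] assms(2,3) by simp
  moreover have "rr L r l < q l * rr L r (l - 1)"
    using non_redundant_arch_ineqs(1)[OF assms(1), of l] assms(2,3) by simp
  ultimately show False by simp
qed

end

theorem corollary4p17:
  fixes m n L :: nat and p q :: "nat \<Rightarrow> nat"
  assumes "m \<ge> 2" and "n \<ge> 2" and "L \<ge> 2"
    and "\<forall>l\<in>{1..L}. p l > 0 \<and> q l > 0"
    and "n = (\<Prod>l\<in>{1..L}. p l)" and "m = (\<Prod>l\<in>{1..L}. q l)"
  shows "((\<forall>l\<in>{1..L}. p l \<ge> 2 \<and> q l \<ge> 2) \<longrightarrow>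
            (\<exists>r. (\<forall>l\<in>{1..L-1}. r l > 0) \<and> non_redundant (arch p q r L)))
       \<and> ((q 1 = 1 \<or> p L = 1 \<or> (\<exists>l\<in>{2..L-1}. p l * q l = 1)) \<longrightarrow>
            \<not> (\<exists>r. (\<forall>l\<in>{1..L-1}. r l > 0) \<and> non_redundant (arch p q r L)))"
proof (intro conjI impI notI)
  assume "\<forall>l\<in>{1..L}. p l \<ge> 2 \<and> q l \<ge> 2"
  then show "\<exists>r. (\<forall>l\<in>{1..L-1}. r l > 0) \<and> non_redundant (arch p q r L)"
    using non_redundant_arch_one[OF assms(4)] by auto
next
  assume degenerate: "q 1 = 1 \<or> p L = 1 \<or> (\<exists>l\<in>{2..L-1}. p l * q l = 1)"
    and "\<exists>r. (\<forall>l\<in>{1..L-1}. r l > 0) \<and> non_redundant (arch p q r L)"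
  then obtain r where r_pos: "\<forall>l\<in>{1..L-1}. r l > 0" and nr: "non_redundant (arch p q r L)"
    by blast
  have "q 1 \<noteq> 1" "p L \<noteq> 1"
    using non_redundant_arch_first_q[OF assms(4) nr] non_redundant_arch_last_p[OF assms(4) nr]
      r_pos assms(3) by auto
  moreover have "p l * q l \<noteq> 1" if "l \<in> {2..L-1}" for l
    using non_redundant_arch_inner[OF assms(4) nr] that by auto
  ultimately show False
    using degenerate by blast
qed

end
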